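(* Let $I$ be a compact interval and let $f\colon I\to I$ be continuous. Let $2^f\colon 2^I\to 2^I$ be the induced map $2^f(C)=f(C)$ on the hyperspace $2^I$. Then the set $\mathrm{Per}(2^f)$ of fundamental periods of periodic points of $2^f$ is equal to one of $\{1\}$, $\{1,2\}$, or $\mathbb N$.
   Context: For a compact metric space $X$, $2^X$ denotes the space of nonempty closed subsets of $X$ with the Hausdorff metric, and for continuous $f\colon X\to X$ the induced map $2^f\colon 2^X\to 2^X$ is $2^f(C)=\{f(x):x\in C\}$. For a map $g$, $\mathrm{Per}(g)$ denotes the set of all $k\in\mathbb N$ such that some point has fundamental (least) period $k$ under $g$. *)

theory Defs
  imports "HOL-Analysis.Analysis"
begin

text \<open>The hyperspace 2^X: nonempty closed subsets of X (for compact X, closed in X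
  is the same as closed). The Hausdorff metric is irrelevant for periods.\<close>
definition hyperspace :: "'a::topological_space set \<Rightarrow> 'a set set" where
  "hyperspace X = {C. C \<subseteq> X \<and> C \<noteq> {} \<and> closed C}"

definition induced_map :: "('a \<Rightarrow> 'b) \<Rightarrow> 'a set \<Rightarrow> 'b set" where
  "induced_map f = (\<lambda>C. f ` C)"

definition Per :: "('a \<Rightarrow> 'a) \<Rightarrow> 'a set \<Rightarrow> nat set" where
  "Per g S = {k. k \<ge> 1 \<and> (\<exists>x\<in>S. (g ^^ k) x = x \<and> (\<forall>j. 0 < j \<and> j < k \<longrightarrow> (g ^^ j) x \<noteq> x))}"

end

theory Submission
  imports Defs
begin

text \<open>Every periodic closed set lies in the eventual image \<open>K = \<Inter>n. f\<^sup>n [a,b]\<close>, an interval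
  that \<open>f\<close> maps onto itself; \<open>K\<close> itself is a fixed point of \<open>2\<^sup>f\<close>, so \<open>1\<close> is always a period.
  If \<open>f \<circ> f\<close> is the identity on \<open>K\<close>, every periodic set has period at most \<open>2\<close>.
  Otherwise \<open>f\<^sup>4\<close> has two fixed points \<open>\<alpha> < \<beta>\<close> in \<open>K\<close> with no fixed point in between:
  if the fixed points of \<open>f\<^sup>4\<close> in \<open>K\<close> formed an interval, \<open>f\<close> would be a homeomorphism of it
  with \<open>f\<^sup>4 = id\<close>, hence \<open>f\<^sup>2 = id\<close> there, and the surjectivity of \<open>f\<^sup>2\<close> on \<open>K\<close> would force
  \<open>f\<^sup>2 = id\<close> on all of \<open>K\<close>. On \<open>[\<alpha>,\<beta>]\<close> the map \<open>f\<^sup>4\<close> pushes all interior points in one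
  direction, so some point has a monotone two-sided \<open>f\<^sup>4\<close>-orbit. Interleaving it gives a
  two-sided \<open>f\<close>-orbit \<open>(x\<^sub>i)\<close> whose accumulation points are \<open>f\<^sup>4\<close>-fixed, so \<open>x\<^sub>0\<close> is
  isolated from all other \<open>x\<^sub>i\<close>, and for every \<open>n\<close> the closure of \<open>{x\<^sub>n\<^sub>k | k \<in> \<int>}\<close>
  has period exactly \<open>n\<close> under \<open>2\<^sup>f\<close>.\<close>

section \<open>Iterates and the induced map\<close>

lemma funpow_image_subset:
  assumes "f ` X \<subseteq> X"
  shows "(f ^^ n) ` X \<subseteq> X"
  by (induction n) (use assms in \<open>auto simp: image_subset_iff\<close>)

lemma continuous_on_funpow:
  assumes "continuous_on X f" "f ` X \<subseteq> X"
  shows "continuous_on X (f ^^ n)"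
proof (induction n)
  case (Suc n)
  show ?case
    using continuous_on_compose[OF Suc continuous_on_subset[OF assms(1) funpow_image_subset[OF assms(2)]]]
    by simp
qed (simp add: continuous_on_id)

lemma funpow_image_eq:
  assumes "f ` X = X"
  shows "(f ^^ n) ` X = X"
proof (induction n)
  case (Suc n)
  have "(f ^^ Suc n) ` X = f ` (f ^^ n) ` X"
    by (simp add: image_comp)
  then show ?case
    using Suc assms by simp
qed simp

lemma funpow_induced_map:
  fixes f :: "'a \<Rightarrow> 'a"
  shows "(induced_map f ^^ n) C = (f ^^ n) ` C"
proof (induction n)
  case (Suc n)
  have "(induced_map f ^^ Suc n) C = f ` (induced_map f ^^ n) C"
    by (simp add: induced_map_def)
  then show ?case
    by (simp add: Suc image_comp)
qed simp

lemma funpow_fixed_point: "f x = x \<Longrightarrow> (f ^^ n) x = x"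
  by (induction n) simp_all

lemma funpow_commute: "(f ^^ m) ((f ^^ n) x) = (f ^^ n) ((f ^^ m) x)"
  by (metis add.commute comp_apply funpow_add)

lemma funpow_int_orbit:
  assumes "\<And>i. f (x i) = x (i + 1)"
  shows "(f ^^ j) (x i) = x (i + int j)"
  by (induction j) (simp_all add: assms algebra_simps)

lemma image_closure_compact:
  fixes g :: "'a::t2_space \<Rightarrow> 'b::t2_space"
  assumes "compact X" "continuous_on X g" "T \<subseteq> X"
  shows "g ` closure T = closure (g ` T)"
proof -
  have "closure T \<subseteq> X"
    using assms by (simp add: closure_minimal compact_imp_closed)
  then have cont: "continuous_on (closure T) g" and "compact (closure T)"
    using assms compact_Int_closed[of X "closure T"] by (auto intro: continuous_on_subset simp: Int_absorb1)
  show ?thesis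
  proof
    show "g ` closure T \<subseteq> closure (g ` T)"
      using cont by (rule image_closure_subset) (auto intro: closure_subset[THEN subsetD])
    show "closure (g ` T) \<subseteq> g ` closure T"
      using cont \<open>compact (closure T)\<close>
      by (intro closure_minimal image_mono closure_subset compact_imp_closed compact_continuous_image)
  qed
qed

lemma funpow_induced_map_closure_orbit:
  fixes f :: "'a::t2_space \<Rightarrow> 'a" and x :: "int \<Rightarrow> 'a"
  assumes "compact X" "continuous_on X f" "f ` X \<subseteq> X"
    and "\<And>i. x i \<in> X" "\<And>i. f (x i) = x (i + 1)"
  shows "(induced_map f ^^ j) (closure (x ` S)) = closure (x ` (\<lambda>i. i + int j) ` S)"
proof -
  have "(induced_map f ^^ j) (closure (x ` S)) = closure ((f ^^ j) ` x ` S)"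
    unfolding funpow_induced_map using assms
    by (intro image_closure_compact continuous_on_funpow) auto
  then show ?thesis
    by (simp add: image_image funpow_int_orbit[where x = x, OF assms(5)])
qed

lemma zero_notin_shifted_multiples:
  assumes "0 < j" "j < n"
  shows "0 \<notin> (\<lambda>i. i + int j) ` range (\<lambda>k. int n * k)"
proof
  assume "0 \<in> (\<lambda>i. i + int j) ` range (\<lambda>k. int n * k)"
  then obtain k where "int n * k + int j = 0"
    by auto
  then have "int j = int n * (- k)"
    by simp
  then have "int n dvd int j"
    by (rule dvdI)
  then show False
    using assms by (simp add: nat_dvd_not_less)
qed

lemma Per_induced_map_if_isolated_orbit:
  fixes f :: "'a::t2_space \<Rightarrow> 'a" and x :: "int \<Rightarrow> 'a"
  assumes X: "compact X" "continuous_on X f" "f ` X \<subseteq> X"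
    and orbit: "\<And>i. x i \<in> X" "\<And>i. f (x i) = x (i + 1)"
    and isolated: "x 0 \<notin> closure (x ` (- {0}))"
    and "n \<ge> 1"
  shows "n \<in> Per (induced_map f) (hyperspace X)"
proof -
  define S where "S = range (\<lambda>k. int n * k)"
  define C where "C = closure (x ` S)"
  note shift = funpow_induced_map_closure_orbit[where x = x and S = S, OF X orbit, folded C_def]
  have "0 \<in> S"
    unfolding S_def by (rule range_eqI[of _ _ 0]) simp
  then have "x 0 \<in> C"
    unfolding C_def by (intro closure_subset[THEN subsetD] imageI)
  moreover have "C \<subseteq> X"
    unfolding C_def using X orbit(1) by (intro closure_minimal) (auto simp: compact_imp_closed)
  ultimately have "C \<in> hyperspace X"
    by (auto simp: hyperspace_def C_def)
  moreover have "(\<lambda>i. i + int n) ` S = (\<lambda>k. int n * k) ` range (\<lambda>k. k + 1)"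
    unfolding S_def image_image by (simp add: algebra_simps)
  then have "(\<lambda>i. i + int n) ` S = S"
    by (simp add: S_def)
  then have "(induced_map f ^^ n) C = C"
    using shift[of n] by (simp add: C_def)
  moreover have "(induced_map f ^^ j) C \<noteq> C" if "0 < j" "j < n" for j
  proof -
    have "0 \<notin> (\<lambda>i. i + int j) ` S"
      unfolding S_def by (rule zero_notin_shifted_multiples[OF that])
    then have "closure (x ` (\<lambda>i. i + int j) ` S) \<subseteq> closure (x ` (- {0}))"
      by (intro closure_mono image_mono) auto
    then show ?thesis
      using isolated \<open>x 0 \<in> C\<close> by (auto simp: shift)
  qed
  ultimately show ?thesis
    using \<open>n \<ge> 1\<close> unfolding Per_def by blast
qed

section \<open>Isolated points of two-sided orbits\<close>

lemma not_in_closure_range_if_tendsto: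
  fixes s :: "nat \<Rightarrow> 'a::heine_borel"
  assumes "s \<longlonglongrightarrow> L" "c \<noteq> L" "\<And>n. s n \<noteq> c"
  shows "c \<notin> closure (range s)"
proof -
  have "closure (range s) \<subseteq> insert L (range s)"
    using compact_sequence_with_limit[OF assms(1)]
    by (intro closure_minimal compact_imp_closed) auto
  then show ?thesis
    using assms(2,3) by auto
qed

lemma not_in_closure_range_if_residues:
  fixes s :: "nat \<Rightarrow> 'a::topological_space"
  assumes "m > 0" "\<And>j. j < m \<Longrightarrow> c \<notin> closure (range (\<lambda>n. s (m * n + j)))"
  shows "c \<notin> closure (range s)"
proof -
  let ?U = "\<Union>j<m. closure (range (\<lambda>n. s (m * n + j)))"
  have "s i \<in> ?U" for i
  proof (rule UN_I)
    show "i mod m \<in> {..<m}"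
      using assms(1) by simp
    have "s i = s (m * (i div m) + i mod m)"
      by simp
    then show "s i \<in> closure (range (\<lambda>n. s (m * n + i mod m)))"
      by (intro closure_subset[THEN subsetD] range_eqI)
  qed
  then have "closure (range s) \<subseteq> ?U"
    by (intro closure_minimal closed_UN) auto
  then show ?thesis
    using assms(2) by auto
qed

lemma orbit_interleaving_funpow_orbit:
  fixes f :: "'a \<Rightarrow> 'a" and z :: "int \<Rightarrow> 'a"
  assumes "f ` X \<subseteq> X" "m > 0" "\<And>k. z k \<in> X" "\<And>k. (f ^^ m) (z k) = z (k + 1)"
  obtains x where "\<And>i. x i \<in> X" "\<And>i. f (x i) = x (i + 1)" "\<And>k. x (int m * k) = z k"
proof
  define x where "x i = (f ^^ nat (i mod int m)) (z (i div int m))" for i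
  have x_eq: "x (int m * q + r) = (f ^^ nat r) (z q)" if "0 \<le> r" "r < int m" for q r
    using that by (simp add: x_def)
  show "x i \<in> X" for i
    unfolding x_def using funpow_image_subset[OF assms(1)] assms(3) by blast
  show "x (int m * k) = z k" for k
    using x_eq[of 0 k] assms(2) by simp
  show "f (x i) = x (i + 1)" for i
  proof -
    define q r where "q = i div int m" and "r = i mod int m"
    have i: "i = int m * q + r" and r: "0 \<le> r" "r < int m"
      using assms(2) by (simp_all add: q_def r_def)
    have "f (x i) = f ((f ^^ nat r) (z q))"
      unfolding i by (simp add: x_eq r)
    also have "\<dots> = (f ^^ nat (r + 1)) (z q)"
      using r by (simp add: Suc_nat_eq_nat_zadd1[symmetric] add.commute)
    also have "\<dots> = x (i + 1)"
    proof (cases "r + 1 < int m")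
      case True
      then show ?thesis
        unfolding i add.assoc using r by (simp add: x_eq)
    next
      case False
      then have "r + 1 = int m"
        using r by simp
      then have "(f ^^ nat (r + 1)) (z q) = x (int m * (q + 1) + 0)"
        using assms(2,4) x_eq[of 0 "q + 1"] by simp
      also have "int m * (q + 1) + 0 = i + 1"
        unfolding i using \<open>r + 1 = int m\<close> by (simp add: algebra_simps)
      finally show ?thesis .
    qed
    finally show ?thesis .
  qed
qed

lemma fixed_point_if_tendsto_orbit:
  fixes g :: "'a::t2_space \<Rightarrow> 'a"
  assumes "closed X" "continuous_on X g" "\<And>n. s n \<in> X" "s \<longlonglongrightarrow> L" "(\<lambda>n. g (s n)) \<longlonglongrightarrow> L"
  shows "g L = L"
proof -
  have "L \<in> X"
    using assms(1,3,4) by (rule closed_sequentially)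
  then have "(\<lambda>n. g (s n)) \<longlonglongrightarrow> g L"
    using assms(3) by (intro continuous_on_tendsto_compose[OF assms(2,4)]) simp_all
  then show ?thesis
    using assms(5) LIMSEQ_unique by blast
qed

lemma not_in_closure_residue_sequences:
  fixes f :: "'a::heine_borel \<Rightarrow> 'a"
  assumes f: "continuous_on X f" "f ` X \<subseteq> X" and "m > 0"
    and w: "\<And>n. w n \<in> X" "w \<longlonglongrightarrow> L" "L \<in> X" "(f ^^ m) L = L"
    and c: "(f ^^ m) c \<noteq> c" "\<And>n. s n \<noteq> c"
    and s: "\<And>n j. j < m \<Longrightarrow> s (m * n + j) = (f ^^ e j) (w n)"
  shows "c \<notin> closure (range s)"
proof (rule not_in_closure_range_if_residues[OF \<open>m > 0\<close>])
  fix j assume "j < m"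
  show "c \<notin> closure (range (\<lambda>n. s (m * n + j)))"
  proof (rule not_in_closure_range_if_tendsto)
    show "(\<lambda>n. s (m * n + j)) \<longlonglongrightarrow> (f ^^ e j) L"
      unfolding s[OF \<open>j < m\<close>]
      by (rule continuous_on_tendsto_compose[OF continuous_on_funpow[OF f] w(2,3)]) (simp add: w(1))
    have "(f ^^ m) ((f ^^ e j) L) = (f ^^ e j) ((f ^^ m) L)"
      by (rule funpow_commute)
    then show "c \<noteq> (f ^^ e j) L"
      using c(1) w(4) by auto
    show "s (m * n + j) \<noteq> c" for n
      by (rule c(2))
  qed
qed

lemma two_sided_orbit_neq_start:
  assumes orbit: "\<And>i. f (x i) = x (i + 1)"
    and aperiodic: "\<And>k. k > 0 \<Longrightarrow> x (int m * k) \<noteq> x 0" and "i \<noteq> 0"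
  shows "x i \<noteq> x 0"
proof
  assume "x i = x 0"
  define p where "p = nat \<bar>i\<bar>"
  have "(f ^^ p) (x 0) = x 0"
  proof (cases "i > 0")
    case True
    then show ?thesis
      using \<open>x i = x 0\<close> funpow_int_orbit[where x = x, OF orbit, of p 0] by (simp add: p_def)
  next
    case False
    then show ?thesis
      using \<open>x i = x 0\<close> funpow_int_orbit[where x = x, OF orbit, of p i] by (simp add: p_def)
  qed
  then have "x (int (p * m)) = x 0"
    using funpow_int_orbit[where x = x, OF orbit, of "p * m" 0]
    by (simp add: funpow_mult[symmetric] funpow_fixed_point)
  then show False
    using aperiodic[of "int p"] \<open>i \<noteq> 0\<close> by (simp add: p_def mult.commute)
qed

lemma Compl_zero_int: "- {0::int} = range (\<lambda>k. int k + 1) \<union> range (\<lambda>k. - int k - 1)"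
proof -
  have "i \<in> range (\<lambda>k. int k + 1) \<union> range (\<lambda>k. - int k - 1)" if "i \<noteq> 0" for i
  proof (cases "i > 0")
    case True
    then have "i = int (nat (i - 1)) + 1"
      by simp
    then show ?thesis
      by blast
  next
    case False
    then have "i = - int (nat (- i - 1)) - 1"
      using that by simp
    then show ?thesis
      by blast
  qed
  then show ?thesis
    by force
qed

lemma isolated_point_of_orbit:
  fixes f :: "'a::heine_borel \<Rightarrow> 'a" and x :: "int \<Rightarrow> 'a"
  assumes f: "closed X" "continuous_on X f" "f ` X \<subseteq> X" and "m > 0"
    and orbit: "\<And>i. x i \<in> X" "\<And>i. f (x i) = x (i + 1)"
    and forward: "convergent (\<lambda>k. x (int m * int k))"
    and backward: "convergent (\<lambda>k. x (- int m * int k))"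
    and aperiodic: "\<And>k. k > 0 \<Longrightarrow> x (int m * k) \<noteq> x 0"
  shows "x 0 \<notin> closure (x ` (- {0}))"
proof -
  note funpow_orbit = funpow_int_orbit[where x = x, OF orbit(2)]
  note not_start = two_sided_orbit_neq_start[where x = x, OF orbit(2) aperiodic]
  have not_fixed: "(f ^^ m) (x 0) \<noteq> x 0"
    using funpow_orbit[of m 0] not_start[of "int m"] \<open>m > 0\<close> by simp
  have cont: "continuous_on X (f ^^ m)"
    by (rule continuous_on_funpow[OF f(2,3)])
  obtain L1 where L1: "(\<lambda>k. x (int m * int k)) \<longlonglongrightarrow> L1"
    using forward convergent_def by blast
  obtain L2 where L2: "(\<lambda>k. x (- int m * int k)) \<longlonglongrightarrow> L2"
    using backward convergent_def by blast
  have "L1 \<in> X"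
    by (rule closed_sequentially[OF f(1) _ L1]) (rule orbit(1))
  have "L2 \<in> X"
    by (rule closed_sequentially[OF f(1) _ L2]) (rule orbit(1))
  have "(\<lambda>k. (f ^^ m) (x (int m * int k))) \<longlonglongrightarrow> L1"
    using LIMSEQ_Suc[OF L1] by (simp add: funpow_orbit algebra_simps)
  then have "(f ^^ m) L1 = L1"
    using orbit(1) L1 by (intro fixed_point_if_tendsto_orbit[OF f(1) cont])
  have "(\<lambda>k. (f ^^ m) (x (- int m * int (Suc k)))) \<longlonglongrightarrow> L2"
    using L2 by (simp add: funpow_orbit algebra_simps)
  then have "(f ^^ m) L2 = L2"
    using orbit(1) LIMSEQ_Suc[OF L2]
    by (intro fixed_point_if_tendsto_orbit[OF f(1) cont, of "\<lambda>k. x (- int m * int (Suc k))"])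
  \<comment> \<open>Along each residue class mod \<open>m\<close> both tails converge to images of \<open>L1\<close>, \<open>L2\<close>, which
    are \<open>f\<^sup>m\<close>-fixed, unlike \<open>x 0\<close>.\<close>
  have "x 0 \<notin> closure (range (\<lambda>k. x (int k + 1)))"
  proof (rule not_in_closure_residue_sequences[OF f(2,3) \<open>m > 0\<close> _ L1 \<open>L1 \<in> X\<close>
        \<open>(f ^^ m) L1 = L1\<close> not_fixed])
    show "x (int (m * n + j) + 1) = (f ^^ Suc j) (x (int m * int n))" for n j
      using funpow_orbit[of "Suc j"] by (simp add: algebra_simps)
  qed (use orbit(1) not_start in auto)
  moreover have "x 0 \<notin> closure (range (\<lambda>k. x (- int k - 1)))"
  proof (rule not_in_closure_residue_sequences[OF f(2,3) \<open>m > 0\<close> _ LIMSEQ_Suc[OF L2]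
        \<open>L2 \<in> X\<close> \<open>(f ^^ m) L2 = L2\<close> not_fixed])
    show "x (- int (m * n + j) - 1) = (f ^^ (m - 1 - j)) (x (- int m * int (Suc n)))"
      if "j < m" for n j
    proof -
      have "- int m * int (Suc n) + int (m - 1 - j) = - int (m * n + j) - 1"
        using that by (simp add: of_nat_diff algebra_simps)
      then show ?thesis
        by (simp only: funpow_orbit)
    qed
  qed (use orbit(1) not_start in auto)
  ultimately show ?thesis
    by (simp add: Compl_zero_int image_Un image_image)
qed

section \<open>The eventual image\<close>

definition eventual_image :: "('a \<Rightarrow> 'a) \<Rightarrow> 'a set \<Rightarrow> 'a set" where
  "eventual_image f X = (\<Inter>n. (f ^^ n) ` X)"

lemma funpow_image_antimono:
  assumes "f ` X \<subseteq> X" "m \<le> n"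
  shows "(f ^^ n) ` X \<subseteq> (f ^^ m) ` X"
proof -
  have "(f ^^ n) ` X = (f ^^ m) ` (f ^^ (n - m)) ` X"
    using assms(2) by (simp add: image_comp funpow_add[symmetric])
  also have "\<dots> \<subseteq> (f ^^ m) ` X"
    using funpow_image_subset[OF assms(1)] by (rule image_mono)
  finally show ?thesis .
qed

lemma periodic_subset_eventual_image:
  assumes "f ` X \<subseteq> X" "C \<subseteq> X" "k > 0" "(f ^^ k) ` C = C"
  shows "C \<subseteq> eventual_image f X"
proof -
  have "(f ^^ (k * q)) ` C = C" for q
  proof (induction q)
    case (Suc q)
    have "(f ^^ (k * Suc q)) ` C = (f ^^ k) ` (f ^^ (k * q)) ` C"
      by (simp add: funpow_add image_comp)
    then show ?case
      using Suc assms(4) by simp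
  qed simp
  then have "C \<subseteq> (f ^^ n) ` X" for n
    using image_mono[OF assms(2), of "f ^^ (k * n)"] funpow_image_antimono[OF assms(1), of n "k * n"] assms(3)
    by simp
  then show ?thesis
    by (auto simp: eventual_image_def)
qed

lemma image_eventual_image_subset:
  assumes "f ` X \<subseteq> X"
  shows "f ` eventual_image f X \<subseteq> eventual_image f X"
proof -
  have "f ` eventual_image f X \<subseteq> (f ^^ n) ` X" for n
  proof -
    have "f ` eventual_image f X \<subseteq> f ` (f ^^ n) ` X"
      by (rule image_mono) (auto simp: eventual_image_def)
    also have "\<dots> = (f ^^ Suc n) ` X"
      by (simp add: image_comp)
    also have "\<dots> \<subseteq> (f ^^ n) ` X"
      by (rule funpow_image_antimono[OF assms]) simp
    finally show ?thesis .
  qed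
  then show ?thesis
    by (auto simp: eventual_image_def)
qed

lemma eventual_image_subset_image:
  fixes f :: "'a::heine_borel \<Rightarrow> 'a"
  assumes "compact X" "continuous_on X f" "f ` X \<subseteq> X"
  shows "eventual_image f X \<subseteq> f ` eventual_image f X"
proof
  fix y assume y: "y \<in> eventual_image f X"
  define T where "T n = {x \<in> (f ^^ n) ` X. f x = y}" for n
  have "compact (T n)" for n
  proof -
    have S: "compact ((f ^^ n) ` X)"
      using assms by (intro compact_continuous_image continuous_on_funpow)
    moreover have "closed (T n)"
      unfolding T_def
      by (intro continuous_closed_preimage_constant compact_imp_closed[OF S]
          continuous_on_subset[OF assms(2) funpow_image_subset[OF assms(3)]])
    ultimately have "compact ((f ^^ n) ` X \<inter> T n)"
      by (rule compact_Int_closed)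
    then show ?thesis
      by (simp add: T_def Int_absorb1)
  qed
  moreover have "T n \<noteq> {}" for n
  proof -
    have "y \<in> (f ^^ Suc n) ` X"
      using y unfolding eventual_image_def by blast
    then show ?thesis
      by (auto simp: T_def image_comp[symmetric])
  qed
  moreover have "T n \<subseteq> T m" if "m \<le> n" for m n
    using funpow_image_antimono[OF assms(3) that] by (auto simp: T_def)
  ultimately have "\<Inter>(range T) \<noteq> {}"
    by (rule compact_nest)
  then show "y \<in> f ` eventual_image f X"
    by (auto simp: T_def eventual_image_def)
qed

lemma image_eventual_image:
  fixes f :: "'a::heine_borel \<Rightarrow> 'a"
  assumes "compact X" "continuous_on X f" "f ` X \<subseteq> X"
  shows "f ` eventual_image f X = eventual_image f X"
  using image_eventual_image_subset[OF assms(3)] eventual_image_subset_image[OF assms]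
  by (rule subset_antisym)

lemma eventual_image_interval:
  fixes f :: "real \<Rightarrow> real"
  assumes "a \<le> b" "continuous_on {a..b} f" "f ` {a..b} \<subseteq> {a..b}"
  obtains u v where "eventual_image f {a..b} = {u..v}" "a \<le> u" "u \<le> v" "v \<le> b"
proof -
  define S where "S n = (f ^^ n) ` {a..b}" for n
  have S: "compact (S n)" "connected (S n)" "S n \<noteq> {}" for n
    unfolding S_def using assms
    by (auto intro!: compact_continuous_image connected_continuous_image continuous_on_funpow)
  have nest: "S n \<subseteq> S m" if "m \<le> n" for m n
    unfolding S_def using funpow_image_antimono[OF assms(3) that] .
  have "compact (\<Inter>(range S))"
    using S(1) by (intro compact_Inter) auto
  moreover have "connected (\<Inter>(range S))"
    by (rule connected_nest[OF S(1,2) nest])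
  ultimately obtain u v where uv: "\<Inter>(range S) = {u..v}"
    using connected_compact_interval_1 by blast
  have "\<Inter>(range S) \<noteq> {}"
    by (rule compact_nest[OF S(1,3) nest])
  moreover have "\<Inter>(range S) \<subseteq> {a..b}"
    using INT_lower[of 0 UNIV S] by (simp add: S_def)
  moreover have "eventual_image f {a..b} = \<Inter>(range S)"
    by (simp add: eventual_image_def S_def)
  ultimately show ?thesis
    using that uv by auto
qed

section \<open>Orbits of interval maps\<close>

lemma fixed_point_in_interval:
  fixes g :: "real \<Rightarrow> real"
  assumes "p \<le> q" "continuous_on {p..q} g" "(p \<le> g p \<and> g q \<le> q) \<or> (g p \<le> p \<and> q \<le> g q)"
  obtains s where "p \<le> s" "s \<le> q" "g s = s"
proof -
  have cont: "continuous_on {p..q} (\<lambda>t. g t - t)"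
    using assms(2) by (intro continuous_intros)
  have "\<exists>s. p \<le> s \<and> s \<le> q \<and> g s - s = 0"
    using assms(3)
  proof
    assume "p \<le> g p \<and> g q \<le> q"
    then show ?thesis
      by (intro IVT2'[OF _ _ assms(1) cont]) simp_all
  next
    assume "g p \<le> p \<and> q \<le> g q"
    then show ?thesis
      by (intro IVT'[OF _ _ assms(1) cont]) simp_all
  qed
  then show ?thesis
    using that by auto
qed

lemma fixed_point_free_sign:
  fixes \<phi> :: "real \<Rightarrow> real"
  assumes "continuous_on {\<alpha>..\<beta>} \<phi>" "\<And>t. \<alpha> < t \<Longrightarrow> t < \<beta> \<Longrightarrow> \<phi> t \<noteq> t"
  shows "(\<forall>t\<in>{\<alpha><..<\<beta>}. t < \<phi> t) \<or> (\<forall>t\<in>{\<alpha><..<\<beta>}. \<phi> t < t)"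
proof (rule ccontr)
  assume "\<not> ?thesis"
  then obtain t1 t2 where t: "\<alpha> < t1" "t1 < \<beta>" "\<alpha> < t2" "t2 < \<beta>" "\<phi> t1 \<le> t1" "t2 \<le> \<phi> t2"
    by (auto simp: not_less)
  define p q where "p = min t1 t2" and "q = max t1 t2"
  have "p \<le> q"
    by (simp add: p_def q_def)
  moreover have "continuous_on {p..q} \<phi>"
    by (rule continuous_on_subset[OF assms(1)]) (use t in \<open>auto simp: p_def q_def\<close>)
  moreover have "(p \<le> \<phi> p \<and> \<phi> q \<le> q) \<or> (\<phi> p \<le> p \<and> q \<le> \<phi> q)"
    using t by (cases "t1 \<le> t2") (simp_all add: p_def q_def)
  ultimately obtain s where "p \<le> s" "s \<le> q" "\<phi> s = s"
    by (rule fixed_point_in_interval)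
  moreover have "\<alpha> < p" "q < \<beta>"
    using t by (simp_all add: p_def q_def)
  ultimately show False
    using assms(2)[of s] by simp
qed

lemma backward_orbit_below:
  fixes \<phi> :: "real \<Rightarrow> real"
  assumes "continuous_on {\<alpha>..\<beta>} \<phi>" "\<phi> \<alpha> = \<alpha>" "\<And>t. \<alpha> < t \<Longrightarrow> t < \<beta> \<Longrightarrow> t < \<phi> t"
    and "\<alpha> < z0" "z0 < \<beta>"
  obtains w where "w 0 = z0" "\<And>n. w n \<in> {\<alpha><..<\<beta>}" "\<And>n. \<phi> (w (Suc n)) = w n" "convergent w"
proof -
  have "\<exists>s. \<alpha> < s \<and> s < t \<and> \<phi> s = t" if t: "\<alpha> < t" "t < \<beta>" for t
  proof -
    have "continuous_on {\<alpha>..t} \<phi>"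
      using t by (intro continuous_on_subset[OF assms(1)]) simp
    then obtain s where "\<alpha> \<le> s" "s \<le> t" "\<phi> s = t"
      using IVT'[of \<phi> \<alpha> t t] assms(2) assms(3)[OF t] t by auto
    moreover have "s \<noteq> \<alpha>" "s \<noteq> t"
      using \<open>\<phi> s = t\<close> assms(2) assms(3)[OF t] t by auto
    ultimately have "\<alpha> < s" "s < t" "\<phi> s = t"
      by simp_all
    then show ?thesis
      by blast
  qed
  then obtain P where P: "\<And>t. \<alpha> < t \<Longrightarrow> t < \<beta> \<Longrightarrow> \<alpha> < P t \<and> P t < t \<and> \<phi> (P t) = t"
    by metis
  define w where "w n = (P ^^ n) z0" for n
  have w: "w n \<in> {\<alpha><..<\<beta>}" for n
  proof (induction n)
    case (Suc n)
    then show ?case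
      using P[of "w n"] by (simp add: w_def)
  qed (simp add: w_def assms(4,5))
  have step: "\<alpha> < w (Suc n) \<and> w (Suc n) < w n \<and> \<phi> (w (Suc n)) = w n" for n
    using P[of "w n"] w[of n] by (simp add: w_def)
  have "decseq w"
    using step by (intro decseq_SucI less_imp_le) blast
  moreover have "\<forall>n. \<alpha> \<le> w n"
    using w by (simp add: less_imp_le)
  ultimately have "convergent w"
    using decseq_convergent convergent_def by metis
  moreover have "w 0 = z0"
    by (simp add: w_def)
  ultimately show ?thesis
    using that w step by blast
qed

lemma forward_orbit_start:
  fixes \<phi> :: "real \<Rightarrow> real"
  assumes "\<alpha> < \<beta>" "continuous_on {\<alpha>..\<beta>} \<phi>" "\<phi> \<alpha> = \<alpha>" "\<phi> \<beta> = \<beta>"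
    and up: "\<And>t. \<alpha> < t \<Longrightarrow> t < \<beta> \<Longrightarrow> t < \<phi> t"
  obtains z0 where "\<alpha> < z0" "z0 < \<beta>" "\<And>n. (\<phi> ^^ n) z0 \<in> {\<alpha>..\<beta>}"
  \<comment> \<open>If \<open>\<phi>\<close> reaches \<open>\<beta>\<close> at an interior point, a preimage of \<open>\<beta>\<close> has an eventually fixed
    orbit; otherwise every interior orbit stays in the interior.\<close>
proof (cases "\<exists>y. \<alpha> < y \<and> y < \<beta> \<and> \<beta> \<le> \<phi> y")
  case True
  then obtain y where y: "\<alpha> < y" "y < \<beta>" "\<beta> \<le> \<phi> y"
    by blast
  have "continuous_on {\<alpha>..y} \<phi>"
    using y by (intro continuous_on_subset[OF assms(2)]) simp
  then obtain c where c: "\<alpha> \<le> c" "c \<le> y" "\<phi> c = \<beta>"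
    using IVT'[of \<phi> \<alpha> \<beta> y] y assms(1,3) by auto
  have "c \<noteq> \<alpha>"
    using c assms(1,3) by auto
  have "(\<phi> ^^ n) c \<in> {c, \<beta>}" for n
    by (induction n) (use c assms(4) in auto)
  moreover have "{c, \<beta>} \<subseteq> {\<alpha>..\<beta>}"
    using c y by auto
  ultimately have "(\<phi> ^^ n) c \<in> {\<alpha>..\<beta>}" for n
    by blast
  moreover have "\<alpha> < c" "c < \<beta>"
    using c y \<open>c \<noteq> \<alpha>\<close> by auto
  ultimately show ?thesis
    using that by blast
next
  case False
  define z0 where "z0 = (\<alpha> + \<beta>) / 2"
  have "(\<phi> ^^ n) z0 \<in> {\<alpha><..<\<beta>}" for n
  proof (induction n)
    case (Suc n)
    then show ?case
      using up[of "(\<phi> ^^ n) z0"] False by auto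
  qed (use assms(1) in \<open>simp add: z0_def\<close>)
  then show ?thesis
    using that[of z0] assms(1) by (simp add: z0_def less_imp_le)
qed

definition two_sided :: "(nat \<Rightarrow> 'a) \<Rightarrow> (nat \<Rightarrow> 'a) \<Rightarrow> int \<Rightarrow> 'a" where
  "two_sided v w k = (if 0 \<le> k then v (nat k) else w (nat (- k)))"

lemma two_sided_nonneg [simp]: "two_sided v w (int n) = v n"
  by (simp add: two_sided_def)

lemma two_sided_nonpos: "w 0 = v 0 \<Longrightarrow> two_sided v w (- int n) = w n"
  by (simp add: two_sided_def)

lemma two_sided_orbit:
  assumes "w 0 = v 0" "\<And>n. \<phi> (v n) = v (Suc n)" "\<And>n. \<phi> (w (Suc n)) = w n"
  shows "\<phi> (two_sided v w k) = two_sided v w (k + 1)"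
proof (cases "0 \<le> k")
  case True
  then have "nat (k + 1) = Suc (nat k)"
    by simp
  then show ?thesis
    using True assms(2) by (simp add: two_sided_def)
next
  case False
  then have "nat (- k) = Suc (nat (- (k + 1)))"
    by simp
  then show ?thesis
    using False assms(1) assms(3)[of "nat (- (k + 1))"] by (auto simp: two_sided_def)
qed

lemma forward_orbit_above:
  fixes \<phi> :: "real \<Rightarrow> real"
  assumes "\<alpha> < \<beta>" "continuous_on {\<alpha>..\<beta>} \<phi>" "\<phi> \<alpha> = \<alpha>" "\<phi> \<beta> = \<beta>"
    and up: "\<And>t. \<alpha> < t \<Longrightarrow> t < \<beta> \<Longrightarrow> t < \<phi> t"
  obtains v where "\<alpha> < v 0" "v 0 < \<beta>" "\<And>n. v n \<in> {\<alpha>..\<beta>}" "\<And>n. \<phi> (v n) = v (Suc n)"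
    "\<And>n. n > 0 \<Longrightarrow> v 0 < v n" "convergent v"
proof -
  obtain z0 where z0: "\<alpha> < z0" "z0 < \<beta>" "\<And>n. (\<phi> ^^ n) z0 \<in> {\<alpha>..\<beta>}"
    using forward_orbit_start[OF assms] by blast
  define v where "v n = (\<phi> ^^ n) z0" for n
  have "t \<le> \<phi> t" if t: "t \<in> {\<alpha>..\<beta>}" for t
  proof -
    consider "t = \<alpha>" | "t = \<beta>" | "\<alpha> < t \<and> t < \<beta>"
      using t by fastforce
    then show ?thesis
      using up[of t] assms(3,4) by cases simp_all
  qed
  then have "incseq v"
    unfolding v_def using z0(3) by (intro incseq_SucI) simp
  moreover have "\<forall>n. v n \<le> \<beta>"
    using z0(3) by (simp add: v_def)
  ultimately have "convergent v"
    using incseq_convergent convergent_def by metis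
  moreover have "v 0 < v n" if "n > 0" for n
  proof -
    have "v 0 < v 1"
      using up z0 by (simp add: v_def)
    also have "v 1 \<le> v n"
      using \<open>incseq v\<close> that by (simp add: incseq_def)
    finally show ?thesis .
  qed
  ultimately show ?thesis
    using that[of v] z0 by (simp add: v_def)
qed

lemma two_sided_orbit_upward:
  fixes \<phi> :: "real \<Rightarrow> real"
  assumes "\<alpha> < \<beta>" "continuous_on {\<alpha>..\<beta>} \<phi>" "\<phi> \<alpha> = \<alpha>" "\<phi> \<beta> = \<beta>"
    and up: "\<And>t. \<alpha> < t \<Longrightarrow> t < \<beta> \<Longrightarrow> t < \<phi> t"
  obtains z :: "int \<Rightarrow> real"
  where "\<And>k. z k \<in> {\<alpha>..\<beta>}" "\<And>k. \<phi> (z k) = z (k + 1)" "\<And>k. k > 0 \<Longrightarrow> z k \<noteq> z 0"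
    "convergent (\<lambda>k. z (int k))" "convergent (\<lambda>k. z (- int k))"
proof -
  obtain v where v: "\<alpha> < v 0" "v 0 < \<beta>" "\<And>n. v n \<in> {\<alpha>..\<beta>}" "\<And>n. \<phi> (v n) = v (Suc n)"
    "\<And>n. n > 0 \<Longrightarrow> v 0 < v n" "convergent v"
    using forward_orbit_above[OF assms] by blast
  obtain w where w: "w 0 = v 0" "\<And>n. w n \<in> {\<alpha><..<\<beta>}" "\<And>n. \<phi> (w (Suc n)) = w n" "convergent w"
    using backward_orbit_below[OF assms(2,3) up v(1,2)] by blast
  show ?thesis
  proof (rule that[of "two_sided v w"])
    show "two_sided v w k \<in> {\<alpha>..\<beta>}" for k
      using v(3) w(2) by (auto simp: two_sided_def less_imp_le)
    show "\<phi> (two_sided v w k) = two_sided v w (k + 1)" for k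
      by (rule two_sided_orbit[where w = w and v = v, OF w(1) v(4) w(3)])
    show "two_sided v w k \<noteq> two_sided v w 0" if "k > 0" for k
      using v(5)[of "nat k"] that by (simp add: two_sided_def)
    show "convergent (\<lambda>k. two_sided v w (int k))"
      using v(6) by simp
    show "convergent (\<lambda>k. two_sided v w (- int k))"
      using w(4) by (simp add: two_sided_nonpos[where w = w and v = v, OF w(1)])
  qed
qed

lemma two_sided_orbit_fixed_point_free:
  fixes \<phi> :: "real \<Rightarrow> real"
  assumes "\<alpha> < \<beta>" "continuous_on {\<alpha>..\<beta>} \<phi>" "\<phi> \<alpha> = \<alpha>" "\<phi> \<beta> = \<beta>"
    and "\<And>t. \<alpha> < t \<Longrightarrow> t < \<beta> \<Longrightarrow> \<phi> t \<noteq> t"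
  obtains z :: "int \<Rightarrow> real"
  where "\<And>k. z k \<in> {\<alpha>..\<beta>}" "\<And>k. \<phi> (z k) = z (k + 1)" "\<And>k. k > 0 \<Longrightarrow> z k \<noteq> z 0"
    "convergent (\<lambda>k. z (int k))" "convergent (\<lambda>k. z (- int k))"
  \<comment> \<open>The decreasing case is the increasing one conjugated by \<open>t \<mapsto> - t\<close>.\<close>
  using fixed_point_free_sign[OF assms(2,5)]
proof
  assume "\<forall>t\<in>{\<alpha><..<\<beta>}. t < \<phi> t"
  then show ?thesis
    using two_sided_orbit_upward[OF assms(1-4)] that by auto
next
  assume down: "\<forall>t\<in>{\<alpha><..<\<beta>}. \<phi> t < t"
  define \<psi> where "\<psi> t = - \<phi> (- t)" for t
  have "continuous_on {- \<beta>..- \<alpha>} \<psi>"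
    unfolding \<psi>_def
    by (intro continuous_on_minus continuous_on_compose2[OF assms(2)] continuous_intros) auto
  moreover have "t < \<psi> t" if "- \<beta> < t" "t < - \<alpha>" for t
    using down[rule_format, of "- t"] that by (auto simp: \<psi>_def)
  ultimately obtain z where z: "\<And>k. z k \<in> {- \<beta>..- \<alpha>}" "\<And>k. \<psi> (z k) = z (k + 1)"
    "\<And>k. k > 0 \<Longrightarrow> z k \<noteq> z 0" "convergent (\<lambda>k. z (int k))" "convergent (\<lambda>k. z (- int k))"
    using two_sided_orbit_upward[of "- \<beta>" "- \<alpha>" \<psi>] assms(1,3,4) by (auto simp: \<psi>_def)
  show ?thesis
  proof (rule that[of "\<lambda>k. - z k"])
    show "- z k \<in> {\<alpha>..\<beta>}" for k
      using z(1)[of k] by auto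
    show "\<phi> (- z k) = - z (k + 1)" for k
      using z(2)[of k] by (simp add: \<psi>_def)
    show "convergent (\<lambda>k. - z (int k))" "convergent (\<lambda>k. - z (- int k))"
      using z(4,5) by (auto dest: convergent_minus_iff[THEN iffD1])
  qed (use z(3) in auto)
qed

section \<open>Consecutive fixed points of the fourth iterate\<close>

lemma interval_subset_if_no_gaps:
  fixes F :: "real set"
  assumes "closed F" "lo \<in> F" "hi \<in> F"
    and no_gap: "\<And>\<alpha> \<beta>. \<alpha> \<in> F \<Longrightarrow> \<beta> \<in> F \<Longrightarrow> \<alpha> < \<beta> \<Longrightarrow> \<exists>s\<in>F. \<alpha> < s \<and> s < \<beta>"
  shows "{lo..hi} \<subseteq> F"
proof
  fix t assume t: "t \<in> {lo..hi}"
  show "t \<in> F"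
  proof (rule ccontr)
    assume "t \<notin> F"
    have "compact (F \<inter> {lo..t})"
      by (rule closed_Int_compact[OF assms(1) compact_Icc])
    moreover have "F \<inter> {lo..t} \<noteq> {}"
      using assms(2) t by auto
    ultimately obtain \<alpha> where \<alpha>: "\<alpha> \<in> F \<inter> {lo..t}" "\<And>s. s \<in> F \<inter> {lo..t} \<Longrightarrow> s \<le> \<alpha>"
      by (metis compact_attains_sup)
    have "compact (F \<inter> {t..hi})"
      by (rule closed_Int_compact[OF assms(1) compact_Icc])
    moreover have "F \<inter> {t..hi} \<noteq> {}"
      using assms(3) t by auto
    ultimately obtain \<beta> where \<beta>: "\<beta> \<in> F \<inter> {t..hi}" "\<And>s. s \<in> F \<inter> {t..hi} \<Longrightarrow> \<beta> \<le> s"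
      by (metis compact_attains_inf)
    have "\<alpha> \<noteq> t" "\<beta> \<noteq> t"
      using \<alpha>(1) \<beta>(1) \<open>t \<notin> F\<close> by auto
    then have "\<alpha> < t" "t < \<beta>"
      using \<alpha>(1) \<beta>(1) by simp_all
    then have "\<alpha> < \<beta>"
      by simp
    then obtain s where s: "s \<in> F" "\<alpha> < s" "s < \<beta>"
      using no_gap[of \<alpha> \<beta>] \<alpha>(1) \<beta>(1) by blast
    show False
    proof (cases "s \<le> t")
      case True
      then have "s \<in> F \<inter> {lo..t}"
        using s \<alpha>(1) by simp
      from \<alpha>(2)[OF this] show False
        using s(2) by simp
    next
      case False
      then have "s \<in> F \<inter> {t..hi}"
        using s \<beta>(1) by simp
      from \<beta>(2)[OF this] show False
        using s(3) by simp
    qed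
  qed
qed

lemma compact_eq_interval_if_no_gaps:
  fixes F :: "real set"
  assumes "compact F" "F \<noteq> {}"
    and no_gap: "\<And>\<alpha> \<beta>. \<alpha> \<in> F \<Longrightarrow> \<beta> \<in> F \<Longrightarrow> \<alpha> < \<beta> \<Longrightarrow> \<exists>s\<in>F. \<alpha> < s \<and> s < \<beta>"
  obtains lo hi where "lo \<le> hi" "F = {lo..hi}"
proof -
  obtain lo hi where lo: "lo \<in> F" "\<And>t. t \<in> F \<Longrightarrow> lo \<le> t" and hi: "hi \<in> F" "\<And>t. t \<in> F \<Longrightarrow> t \<le> hi"
    using compact_attains_inf[OF assms(1,2)] compact_attains_sup[OF assms(1,2)] by metis
  have "{lo..hi} \<subseteq> F"
    by (rule interval_subset_if_no_gaps[OF compact_imp_closed[OF assms(1)] lo(1) hi(1) no_gap])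
  then have "F = {lo..hi}"
    using lo(2) hi(2) by auto
  then show ?thesis
    using that lo(1) by simp
qed

lemma compact_fixed_points:
  fixes g :: "real \<Rightarrow> real"
  assumes "continuous_on {u..v} g"
  shows "compact {t \<in> {u..v}. g t = t}"
proof -
  have "closed {t \<in> {u..v}. g t - t = 0}"
    using assms by (intro continuous_closed_preimage_constant continuous_intros) auto
  then have "compact ({u..v} \<inter> {t \<in> {u..v}. g t - t = 0})"
    by (intro compact_Int_closed) auto
  moreover have "{u..v} \<inter> {t \<in> {u..v}. g t - t = 0} = {t \<in> {u..v}. g t = t}"
    by auto
  ultimately show ?thesis
    by simp
qed

lemma fixed_points_nonempty:
  fixes g :: "real \<Rightarrow> real"
  assumes "u \<le> v" "continuous_on {u..v} g" "g ` {u..v} \<subseteq> {u..v}"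
  shows "{t \<in> {u..v}. g t = t} \<noteq> {}"
proof -
  have "g u \<in> {u..v}" "g v \<in> {u..v}"
    using assms(1,3) by (auto simp: image_subset_iff)
  then obtain s where "u \<le> s" "s \<le> v" "g s = s"
    using fixed_point_in_interval[OF assms(1,2)] by auto
  then show ?thesis
    by auto
qed

lemma image_funpow_fixed_points_subset:
  assumes "f ` X \<subseteq> X"
  shows "f ` {t \<in> X. (f ^^ m) t = t} \<subseteq> {t \<in> X. (f ^^ m) t = t}"
  using assms by (auto simp: funpow_swap1[symmetric])

lemma funpow2_eq_if_funpow4_eq:
  fixes f :: "real \<Rightarrow> real"
  assumes "continuous_on {p..q} f" "f ` {p..q} \<subseteq> {p..q}"
    and id4: "\<And>t. t \<in> {p..q} \<Longrightarrow> (f ^^ 4) t = t" and "t \<in> {p..q}"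
  shows "(f ^^ 2) t = t"
  \<comment> \<open>\<open>f\<close> is injective, hence strictly monotone, so \<open>f\<^sup>2\<close> is strictly increasing; a strictly
    increasing map whose square is the identity is the identity.\<close>
proof -
  have inj: "inj_on f {p..q}"
  proof (rule inj_onI)
    fix x y assume "x \<in> {p..q}" "y \<in> {p..q}" "f x = f y"
    then show "x = y"
      using id4[of x] id4[of y] by (simp add: numeral_eq_Suc)
  qed
  have mono: "(f ^^ 2) x < (f ^^ 2) y" if "x \<in> {p..q}" "y \<in> {p..q}" "x < y" for x y
  proof -
    have "f x \<in> {p..q}" "f y \<in> {p..q}"
      using assms(2) that(1,2) by blast+
    have "strict_mono_on {p..q} f \<or> strict_antimono_on {p..q} f"
      using injective_eq_monotone_map[of "{p..q}" f] inj assms(1) by simp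
    then have "f (f x) < f (f y)"
    proof
      assume m: "strict_mono_on {p..q} f"
      show ?thesis
        using monotone_onD[OF m \<open>f x \<in> {p..q}\<close> \<open>f y \<in> {p..q}\<close>] monotone_onD[OF m that] .
    next
      assume m: "strict_antimono_on {p..q} f"
      show ?thesis
        using monotone_onD[OF m \<open>f y \<in> {p..q}\<close> \<open>f x \<in> {p..q}\<close>] monotone_onD[OF m that] by simp
    qed
    then show ?thesis
      by (simp add: numeral_eq_Suc)
  qed
  have "(f ^^ 2) ((f ^^ 2) t) = t"
    using id4[OF assms(4)] by (simp add: numeral_eq_Suc)
  moreover have "(f ^^ 2) t \<in> {p..q}"
    using funpow_image_subset[OF assms(2)] assms(4) by blast
  ultimately show ?thesis
    using mono[of t "(f ^^ 2) t"] mono[of "(f ^^ 2) t" t] assms(4) by fastforce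
qed

lemma less_self_image_below_fixed_points:
  fixes g :: "real \<Rightarrow> real"
  assumes "continuous_on {u..v} g" "g ` {u..v} \<subseteq> {u..v}"
    and "\<And>s. s \<in> {u..v} \<Longrightarrow> g s = s \<Longrightarrow> lo \<le> s" and "u \<le> t" "t < lo" "t \<le> v"
  shows "t < g t"
proof (rule ccontr)
  assume "\<not> t < g t"
  moreover have "g u \<in> {u..v}"
    by (rule assms(2)[THEN subsetD, OF imageI]) (use assms(4,6) in simp)
  moreover have "continuous_on {u..t} g"
    using assms(6) by (intro continuous_on_subset[OF assms(1)]) simp
  ultimately obtain s where "u \<le> s" "s \<le> t" "g s = s"
    using fixed_point_in_interval[of u t g] assms(4) by force
  then show False
    using assms(3)[of s] assms(5,6) by simp
qed

lemma image_less_self_above_fixed_points: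
  fixes g :: "real \<Rightarrow> real"
  assumes "continuous_on {u..v} g" "g ` {u..v} \<subseteq> {u..v}"
    and "\<And>s. s \<in> {u..v} \<Longrightarrow> g s = s \<Longrightarrow> s \<le> hi" and "hi < t" "u \<le> t" "t \<le> v"
  shows "g t < t"
proof (rule ccontr)
  assume "\<not> g t < t"
  moreover have "g v \<in> {u..v}"
    by (rule assms(2)[THEN subsetD, OF imageI]) (use assms(5,6) in simp)
  moreover have "continuous_on {t..v} g"
    using assms(5) by (intro continuous_on_subset[OF assms(1)]) simp
  ultimately obtain s where "t \<le> s" "s \<le> v" "g s = s"
    using fixed_point_in_interval[of t v g] assms(6) by force
  then show False
    using assms(3)[of s] assms(4,5) by simp
qed

lemma surj_fixed_interval_lower_eq:
  fixes h :: "real \<Rightarrow> real"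
  assumes cont: "continuous_on {u..v} h" and surj: "h ` {u..v} = {u..v}"
    and bounds: "u \<le> lo" "lo \<le> hi" "hi \<le> v"
    and fixed: "\<And>s. s \<in> {u..v} \<Longrightarrow> h (h s) = s \<Longrightarrow> lo \<le> s \<and> s \<le> hi"
    and id: "\<And>s. s \<in> {lo..hi} \<Longrightarrow> h s = s"
  shows "u = lo"
  \<comment> \<open>Otherwise preimages \<open>z\<close> of \<open>u\<close> and \<open>w\<close> of \<open>v\<close> lie right of \<open>hi\<close> and left of \<open>lo\<close>, so
    some \<open>r \<in> [w, lo)\<close> has \<open>h r = z\<close> and \<open>h (h r) = u \<le> r\<close>, whereas \<open>h \<circ> h\<close> moves all
    points left of \<open>lo\<close> to the right.\<close>
proof (rule ccontr)
  assume "u \<noteq> lo"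
  have hK: "h ` {u..v} \<subseteq> {u..v}"
    using surj by simp
  have h_left: "s < h s" if "u \<le> s" "s < lo" for s
    by (rule less_self_image_below_fixed_points[OF cont hK]) (use fixed that bounds in auto)
  have h_right: "h s < s" if "hi < s" "s \<le> v" for s
    by (rule image_less_self_above_fixed_points[OF cont hK]) (use fixed that bounds in auto)
  have hh_left: "s < h (h s)" if "u \<le> s" "s < lo" for s
    by (rule less_self_image_below_fixed_points[OF continuous_on_compose2[OF cont cont hK]])
      (use fixed that bounds surj in \<open>auto simp: image_image[symmetric]\<close>)
  have "v \<in> h ` {u..v}" "u \<in> h ` {u..v}"
    using surj bounds by simp_all
  then obtain w z where w: "w \<in> {u..v}" "h w = v" and z: "z \<in> {u..v}" "h z = u"
    by blast
  have "hi < z"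
  proof -
    have "\<not> z < lo"
      using h_left[of z] z by auto
    moreover have "z \<notin> {lo..hi}"
      using id[of z] z \<open>u \<noteq> lo\<close> bounds by auto
    ultimately show ?thesis
      by simp
  qed
  have "w < lo"
  proof -
    have "\<not> hi < w"
      using h_right[of w] w by auto
    moreover have "w \<notin> {lo..hi}"
      using id[of w] w \<open>hi < z\<close> z(1) by auto
    ultimately show ?thesis
      by simp
  qed
  have "continuous_on {w..lo} h"
    using w(1) bounds by (intro continuous_on_subset[OF cont]) auto
  then obtain r where r: "w \<le> r" "r \<le> lo" "h r = z"
    using IVT2'[of h lo z w] id[of lo] bounds \<open>hi < z\<close> \<open>w < lo\<close> w z(1) by auto
  have "r < lo"
    using r id[of lo] bounds \<open>hi < z\<close> by (cases "r = lo") auto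
  then show False
    using hh_left[of r] r z w(1) by simp
qed

lemma surj_fixed_interval_eq:
  fixes h :: "real \<Rightarrow> real"
  assumes cont: "continuous_on {u..v} h" and surj: "h ` {u..v} = {u..v}"
    and bounds: "u \<le> lo" "lo \<le> hi" "hi \<le> v"
    and fixed: "\<And>s. s \<in> {u..v} \<Longrightarrow> h (h s) = s \<Longrightarrow> lo \<le> s \<and> s \<le> hi"
    and id: "\<And>s. s \<in> {lo..hi} \<Longrightarrow> h s = s"
  shows "{u..v} = {lo..hi}"
proof -
  have "u = lo"
    by (rule surj_fixed_interval_lower_eq[OF assms])
  moreover have "hi = v"
  proof (rule ccontr)
    assume "hi \<noteq> v"
    have "v \<in> h ` {u..v}"
      using surj bounds by simp
    then obtain w where w: "w \<in> {u..v}" "h w = v"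
      by blast
    have "h w < w" if "hi < w"
      using surj that w(1) fixed bounds
      by (intro image_less_self_above_fixed_points[OF cont, of hi]) auto
    moreover have "w \<notin> {lo..hi}"
      using id[of w] w \<open>hi \<noteq> v\<close> bounds by auto
    ultimately show False
      using w \<open>u = lo\<close> by auto
  qed
  ultimately show ?thesis
    by simp
qed

lemma funpow4_fixed_point_gap:
  fixes f :: "real \<Rightarrow> real"
  assumes "u \<le> v" and cont: "continuous_on {u..v} f" and surj: "f ` {u..v} = {u..v}"
    and "y \<in> {u..v}" "f (f y) \<noteq> y"
  obtains \<alpha> \<beta> where "u \<le> \<alpha>" "\<alpha> < \<beta>" "\<beta> \<le> v" "(f ^^ 4) \<alpha> = \<alpha>" "(f ^^ 4) \<beta> = \<beta>"
    "\<And>t. \<alpha> < t \<Longrightarrow> t < \<beta> \<Longrightarrow> (f ^^ 4) t \<noteq> t"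
proof (rule ccontr)
  note gap = that
  assume no_gap: "\<not> thesis"
  define F where "F = {t \<in> {u..v}. (f ^^ 4) t = t}"
  have fK: "f ` {u..v} \<subseteq> {u..v}"
    using surj by simp
  have cont4: "continuous_on {u..v} (f ^^ 4)"
    by (rule continuous_on_funpow[OF cont fK])
  have "compact F"
    unfolding F_def by (rule compact_fixed_points[OF cont4])
  moreover have "F \<noteq> {}"
    unfolding F_def by (rule fixed_points_nonempty[OF \<open>u \<le> v\<close> cont4 funpow_image_subset[OF fK]])
  moreover have "\<exists>s\<in>F. \<alpha> < s \<and> s < \<beta>" if \<alpha>\<beta>: "\<alpha> \<in> F" "\<beta> \<in> F" "\<alpha> < \<beta>" for \<alpha> \<beta>
  proof -
    obtain s where "\<alpha> < s" "s < \<beta>" "(f ^^ 4) s = s"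
      using gap[of \<alpha> \<beta>] no_gap \<alpha>\<beta> by (auto simp: F_def)
    moreover have "s \<in> {u..v}"
      using \<open>\<alpha> < s\<close> \<open>s < \<beta>\<close> \<alpha>\<beta> by (simp add: F_def)
    ultimately show ?thesis
      by (auto simp: F_def)
  qed
  ultimately obtain lo hi where "lo \<le> hi" and F: "F = {lo..hi}"
    by (rule compact_eq_interval_if_no_gaps)
  then have sub: "{lo..hi} \<subseteq> {u..v}" and id4: "\<And>t. t \<in> {lo..hi} \<Longrightarrow> (f ^^ 4) t = t"
    unfolding F[symmetric] F_def by auto
  have "f ` {lo..hi} \<subseteq> {lo..hi}"
    using image_funpow_fixed_points_subset[OF fK, of 4] by (simp add: F[symmetric] F_def)
  then have id2: "(f ^^ 2) t = t" if "t \<in> {lo..hi}" for t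
    using funpow2_eq_if_funpow4_eq continuous_on_subset[OF cont sub] id4 that by blast
  have "{u..v} = {lo..hi}"
  proof (rule surj_fixed_interval_eq[OF continuous_on_funpow[OF cont fK]])
    show "(f ^^ 2) ` {u..v} = {u..v}"
      by (rule funpow_image_eq[OF surj])
    show "u \<le> lo" "lo \<le> hi" "hi \<le> v"
      using sub \<open>lo \<le> hi\<close> by auto
    show "lo \<le> s \<and> s \<le> hi" if "s \<in> {u..v}" "(f ^^ 2) ((f ^^ 2) s) = s" for s
    proof -
      have "(f ^^ 4) s = s"
        using that(2) by (simp add: numeral_eq_Suc)
      then have "s \<in> F"
        using that(1) by (simp add: F_def)
      then show ?thesis
        by (simp add: F)
    qed
  qed (use id2 in simp)
  then show False
    using id2[of y] \<open>y \<in> {u..v}\<close> \<open>f (f y) \<noteq> y\<close> by (simp add: numeral_eq_Suc)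
qed

section \<open>Periods of the induced map\<close>

lemma Per_induced_map_subset_if_involution:
  assumes "f ` X \<subseteq> X" "\<And>y. y \<in> eventual_image f X \<Longrightarrow> f (f y) = y"
  shows "Per (induced_map f) (hyperspace X) \<subseteq> {1, 2}"
proof
  fix k assume "k \<in> Per (induced_map f) (hyperspace X)"
  then obtain C where C: "C \<in> hyperspace X" "(induced_map f ^^ k) C = C" "k \<ge> 1"
    and least: "\<And>j. 0 < j \<Longrightarrow> j < k \<Longrightarrow> (induced_map f ^^ j) C \<noteq> C"
    unfolding Per_def by blast
  have "C \<subseteq> eventual_image f X"
    using C by (intro periodic_subset_eventual_image[OF assms(1)]) (auto simp: hyperspace_def funpow_induced_map)
  then have "(f ^^ 2) y = y" if "y \<in> C" for y
    using assms(2)[of y] that by (auto simp: numeral_eq_Suc)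
  then have "(f ^^ 2) ` C = C"
    using image_cong[of C C "f ^^ 2" id] by simp
  then have "\<not> 2 < k"
    using least[of 2] by (auto simp: funpow_induced_map)
  then show "k \<in> {1, 2}"
    using C(3) by auto
qed

lemma isolated_orbit_if_not_involution:
  fixes f :: "real \<Rightarrow> real"
  assumes "a \<le> b" "continuous_on {a..b} f" "f ` {a..b} \<subseteq> {a..b}"
    and "y \<in> eventual_image f {a..b}" "f (f y) \<noteq> y"
  obtains x :: "int \<Rightarrow> real"
  where "\<And>i. x i \<in> {a..b}" "\<And>i. f (x i) = x (i + 1)" "x 0 \<notin> closure (x ` (- {0}))"
proof -
  obtain u v where uv: "eventual_image f {a..b} = {u..v}" "a \<le> u" "u \<le> v" "v \<le> b"
    using eventual_image_interval[OF assms(1-3)] by blast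
  have "f ` {u..v} = {u..v}"
    using image_eventual_image[OF compact_Icc assms(2,3)] uv(1) by simp
  moreover have "continuous_on {u..v} f"
    using uv by (intro continuous_on_subset[OF assms(2)]) auto
  moreover have "y \<in> {u..v}"
    using assms(4) uv(1) by simp
  ultimately obtain \<alpha> \<beta> where gap: "u \<le> \<alpha>" "\<alpha> < \<beta>" "\<beta> \<le> v" "(f ^^ 4) \<alpha> = \<alpha>" "(f ^^ 4) \<beta> = \<beta>"
    "\<And>t. \<alpha> < t \<Longrightarrow> t < \<beta> \<Longrightarrow> (f ^^ 4) t \<noteq> t"
    using funpow4_fixed_point_gap[OF uv(3)] assms(5) by metis
  have "continuous_on {\<alpha>..\<beta>} (f ^^ 4)"
    using gap uv by (intro continuous_on_subset[OF continuous_on_funpow[OF assms(2,3)]]) auto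
  then obtain z where z: "\<And>k. z k \<in> {\<alpha>..\<beta>}" "\<And>k. (f ^^ 4) (z k) = z (k + 1)"
    "\<And>k. k > 0 \<Longrightarrow> z k \<noteq> z 0" "convergent (\<lambda>k. z (int k))" "convergent (\<lambda>k. z (- int k))"
    using two_sided_orbit_fixed_point_free[OF gap(2) _ gap(4-6)] by blast
  have zX: "z k \<in> {a..b}" for k
    using z(1)[of k] gap uv by auto
  have "0 < (4::nat)"
    by simp
  then obtain x where x: "\<And>i. x i \<in> {a..b}" "\<And>i. f (x i) = x (i + 1)" "\<And>k. x (int 4 * k) = z k"
    by (rule orbit_interleaving_funpow_orbit[where z = z, OF assms(3) _ zX z(2)]) blast
  have "x 0 \<notin> closure (x ` (- {0}))"
  proof (rule isolated_point_of_orbit[where x = x and m = 4, OF closed_atLeastAtMost assms(2,3) _ x(1,2)])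
    have "x (int 4 * int k) = z (int k)" "x (- int 4 * int k) = z (- int k)" for k
      using x(3)[of "int k"] x(3)[of "- int k"] by simp_all
    then show "convergent (\<lambda>k. x (int 4 * int k))" "convergent (\<lambda>k. x (- int 4 * int k))"
      using z(4,5) by simp_all
    show "x (int 4 * k) \<noteq> x 0" if "k > 0" for k
      using z(3)[OF that] x(3)[of k] x(3)[of 0] by simp
  qed simp
  then show ?thesis
    using that x(1,2) by blast
qed

lemma Per_induced_map_if_not_involution:
  fixes f :: "real \<Rightarrow> real"
  assumes "a \<le> b" "continuous_on {a..b} f" "f ` {a..b} \<subseteq> {a..b}"
    and "y \<in> eventual_image f {a..b}" "f (f y) \<noteq> y"
  shows "Per (induced_map f) (hyperspace {a..b}) = {k. k \<ge> 1}"
proof -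
  obtain x :: "int \<Rightarrow> real"
    where x: "\<And>i. x i \<in> {a..b}" "\<And>i. f (x i) = x (i + 1)" "x 0 \<notin> closure (x ` (- {0}))"
    using isolated_orbit_if_not_involution[OF assms] by blast
  have "{k. k \<ge> 1} \<subseteq> Per (induced_map f) (hyperspace {a..b})"
    using Per_induced_map_if_isolated_orbit[where x = x, OF compact_Icc assms(2,3) x] by blast
  moreover have "Per (induced_map f) (hyperspace {a..b}) \<subseteq> {k. k \<ge> 1}"
    by (auto simp: Per_def)
  ultimately show ?thesis
    by (rule subset_antisym[rotated])
qed

lemma one_in_Per_induced_map:
  assumes "C \<in> hyperspace X" "f ` C = C"
  shows "1 \<in> Per (induced_map f) (hyperspace X)"
  unfolding Per_def using assms by (intro CollectI conjI order.refl bexI[of _ C]) (auto simp: induced_map_def)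

theorem theorem3p2:
  fixes f :: "real \<Rightarrow> real" and a b :: real
  assumes "a < b"
    and "continuous_on {a..b} f"
    and "f ` {a..b} \<subseteq> {a..b}"
  shows "Per (induced_map f) (hyperspace {a..b}) \<in> {{1}, {1, 2}, {k. k \<ge> 1}}"
proof -
  let ?P = "Per (induced_map f) (hyperspace {a..b})"
  obtain u v where uv: "eventual_image f {a..b} = {u..v}" "a \<le> u" "u \<le> v" "v \<le> b"
    using eventual_image_interval[OF less_imp_le[OF assms(1)] assms(2,3)] by blast
  have "{u..v} \<in> hyperspace {a..b}"
    using uv by (auto simp: hyperspace_def)
  moreover have "f ` {u..v} = {u..v}"
    using image_eventual_image[OF compact_Icc assms(2,3)] uv(1) by simp
  ultimately have "1 \<in> ?P"
    by (rule one_in_Per_induced_map)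
  show ?thesis
  proof (cases "\<forall>y \<in> eventual_image f {a..b}. f (f y) = y")
    case True
    then have "?P \<subseteq> {1, 2}"
      by (intro Per_induced_map_subset_if_involution[OF assms(3)]) simp
    then have "?P = {1} \<or> ?P = {1, 2}"
      using \<open>1 \<in> ?P\<close> by (cases "2 \<in> ?P") blast+
    then show ?thesis
      by blast
  next
    case False
    then obtain y where "y \<in> eventual_image f {a..b}" "f (f y) \<noteq> y"
      by blast
    then have "?P = {k. k \<ge> 1}"
      by (rule Per_induced_map_if_not_involution[OF less_imp_le[OF assms(1)] assms(2,3)])
    then show ?thesis
      by blast
  qed
qed

end
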